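(* Let $\mathcal{A}=\langle Q,\Sigma,\delta\rangle$ be a semisimple synchronizing automaton with $n=|Q|$ states and former-rank $r=\mathrm{Fr}(\mathcal{A})\ge 2$. Then $\mathcal{A}$ has a reset word of length at most $(n-1)D(2,r,n)$. In particular, $\mathcal{A}$ has a reset word of length at most $\dfrac{n(n-1)^2}{r(r-1)}$.
   Context: An automaton $\mathcal{A}=\langle Q,\Sigma,\delta\rangle$ has finite state set $Q=\{q_1,\dots,q_n\}$, finite alphabet $\Sigma$ and transition function $\delta:Q\times\Sigma\to Q$; write $q\cdot u$ for the action of a word $u\in\Sigma^*$, extended to subsets of $Q$. A word $u$ is reset (synchronizing) if $|Q\cdot u|=1$; $\mathrm{Syn}(\mathcal{A})$ denotes the set of reset words, and $\mathcal{A}$ is synchronizing if $\mathrm{Syn}(\mathcal{A})\neq\emptyset$. Each word $u$ acts linearly on $\mathbb{C}Q$ (basis $Q$) by $q\mapsto q\cdot u$; this action preserves $w^\perp=\{x\in\mathbb{C}Q:\langle x,w\rangle=0\}$, where $w=q_1+\dots+q_n$, and $u$ is reset iff it acts as $0$ on $w^\perp$. Let $\rho:\Sigma^*\to \mathrm{End}(w^\perp)\cong\mathbb{M}_{n-1}(\mathbb{C})$ be the induced representation ($\rho(uv)=\rho(u)\rho(v)$), and let $\mathcal{R}$ be the $\mathbb{C}$-subalgebra of $\mathbb{M}_{n-1}(\mathbb{C})$ generated by $\rho(\Sigma^* )$, with Jacobson radical $\mathrm{Rad}(\mathcal{R})$. The set of radical words is $\mathrm{Rad}(\mathcal{A})=\rho^{-1}(\mathrm{Rad}(\mathcal{R}))\supseteq\mathrm{Syn}(\mathcal{A})$.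 A synchronizing automaton is semisimple if $\mathrm{Rad}(\mathcal{A})=\mathrm{Syn}(\mathcal{A})$ (equivalently $\mathrm{Rad}(\mathcal{R})\cap\rho(\Sigma^* )=\{0\}$). The former-rank is $\mathrm{Fr}(\mathcal{A})=\min\{|Q\cdot u|: u\in\Sigma^*\setminus\mathrm{Syn}(\mathcal{A})\}$. For integers $t,r\le n$, the packing number $D(t,r,n)$ is the maximum size of a family of $r$-element subsets of $[1,n]$ such that no $t$-element subset is contained in more than one member of the family. *)

theory Defs
  imports Complex_Main "HOL-Library.Cardinality"
begin

text \<open>Automaton: finite state type 'q (n = CARD('q)), finite alphabet type 'a,
  transition function delta :: 'q => 'a => 'q. Words are lists over 'a.\<close>

definition word_act :: "('q \<Rightarrow> 'a \<Rightarrow> 'q) \<Rightarrow> 'q \<Rightarrow> 'a list \<Rightarrow> 'q" where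
  "word_act \<delta> q u = foldl \<delta> q u"

definition is_reset :: "('q \<Rightarrow> 'a \<Rightarrow> 'q) \<Rightarrow> 'a list \<Rightarrow> bool" where
  "is_reset \<delta> u \<longleftrightarrow> card ((\<lambda>q. word_act \<delta> q u) ` UNIV) = 1"

definition Syn :: "('q \<Rightarrow> 'a \<Rightarrow> 'q) \<Rightarrow> 'a list set" where
  "Syn \<delta> = {u. is_reset \<delta> u}"

definition synchronizing :: "('q \<Rightarrow> 'a \<Rightarrow> 'q) \<Rightarrow> bool" where
  "synchronizing \<delta> \<longleftrightarrow> Syn \<delta> \<noteq> {}"

text \<open>Linear action of a word on CQ (vectors 'q => complex): basis vector q maps to q.u\<close>
definition lin_act :: "('q::finite \<Rightarrow> 'a \<Rightarrow> 'q) \<Rightarrow> 'a list \<Rightarrow> ('q \<Rightarrow> complex) \<Rightarrow> ('q \<Rightarrow> complex)" where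
  "lin_act \<delta> u x = (\<lambda>p. \<Sum>q\<in>{q. word_act \<delta> q u = p}. x q)"

text \<open>w-perp, w = sum of all basis vectors: <x,w> = sum_q x_q * cnj 1\<close>
definition wperp :: "('q::finite \<Rightarrow> complex) set" where
  "wperp = {x. (\<Sum>q\<in>UNIV. x q * cnj 1) = 0}"

text \<open>Endomorphisms of w-perp are represented as maps on CQ that vanish outside w-perp.
  rho u is the restriction of the action of u to w-perp.\<close>
definition rho :: "('q::finite \<Rightarrow> 'a \<Rightarrow> 'q) \<Rightarrow> 'a list \<Rightarrow> ('q \<Rightarrow> complex) \<Rightarrow> ('q \<Rightarrow> complex)" where
  "rho \<delta> u = (\<lambda>x. if x \<in> wperp then lin_act \<delta> u x else (\<lambda>p. 0))"

inductive_set alg_gen :: "(('q \<Rightarrow> complex) \<Rightarrow> ('q \<Rightarrow> complex)) set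
    \<Rightarrow> (('q \<Rightarrow> complex) \<Rightarrow> ('q \<Rightarrow> complex)) set" for S where
  gen: "f \<in> S \<Longrightarrow> f \<in> alg_gen S"
| zero: "(\<lambda>x. \<lambda>p. 0) \<in> alg_gen S"
| add: "f \<in> alg_gen S \<Longrightarrow> g \<in> alg_gen S \<Longrightarrow> (\<lambda>x. \<lambda>p. f x p + g x p) \<in> alg_gen S"
| smult: "f \<in> alg_gen S \<Longrightarrow> (\<lambda>x. (\<lambda>p. (c::complex) * f x p)) \<in> alg_gen S"
| mult: "f \<in> alg_gen S \<Longrightarrow> g \<in> alg_gen S \<Longrightarrow> (f \<circ> g) \<in> alg_gen S"

definition R_alg :: "('q::finite \<Rightarrow> 'a \<Rightarrow> 'q) \<Rightarrow> (('q \<Rightarrow> complex) \<Rightarrow> ('q \<Rightarrow> complex)) set" where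
  "R_alg \<delta> = alg_gen (range (rho \<delta>))"

definition left_ideal :: "(('q \<Rightarrow> complex) \<Rightarrow> ('q \<Rightarrow> complex)) set
    \<Rightarrow> (('q \<Rightarrow> complex) \<Rightarrow> ('q \<Rightarrow> complex)) set \<Rightarrow> bool" where
  "left_ideal R L \<longleftrightarrow> L \<subseteq> R \<and> (\<lambda>x. \<lambda>p. 0) \<in> L
     \<and> (\<forall>f\<in>L. \<forall>g\<in>L. (\<lambda>x. \<lambda>p. f x p + g x p) \<in> L)
     \<and> (\<forall>f\<in>L. (\<lambda>x. \<lambda>p. - f x p) \<in> L)
     \<and> (\<forall>r\<in>R. \<forall>f\<in>L. r \<circ> f \<in> L)"

definition maximal_left_ideal :: "(('q \<Rightarrow> complex) \<Rightarrow> ('q \<Rightarrow> complex)) set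
    \<Rightarrow> (('q \<Rightarrow> complex) \<Rightarrow> ('q \<Rightarrow> complex)) set \<Rightarrow> bool" where
  "maximal_left_ideal R L \<longleftrightarrow> left_ideal R L \<and> L \<noteq> R
     \<and> (\<forall>L'. left_ideal R L' \<and> L \<subseteq> L' \<longrightarrow> L' = L \<or> L' = R)"

definition jacobson_rad :: "(('q \<Rightarrow> complex) \<Rightarrow> ('q \<Rightarrow> complex)) set
    \<Rightarrow> (('q \<Rightarrow> complex) \<Rightarrow> ('q \<Rightarrow> complex)) set" where
  "jacobson_rad R = {f\<in>R. \<forall>L. maximal_left_ideal R L \<longrightarrow> f \<in> L}"

definition Rad_words :: "('q::finite \<Rightarrow> 'a \<Rightarrow> 'q) \<Rightarrow> 'a list set" where
  "Rad_words \<delta> = {u. rho \<delta> u \<in> jacobson_rad (R_alg \<delta>)}"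

definition semisimple :: "('q::finite \<Rightarrow> 'a \<Rightarrow> 'q) \<Rightarrow> bool" where
  "semisimple \<delta> \<longleftrightarrow> synchronizing \<delta> \<and> Rad_words \<delta> = Syn \<delta>"

definition former_rank :: "('q \<Rightarrow> 'a \<Rightarrow> 'q) \<Rightarrow> nat" where
  "former_rank \<delta> = Min {card ((\<lambda>q. word_act \<delta> q u) ` UNIV) | u. u \<notin> Syn \<delta>}"

definition packing_number :: "nat \<Rightarrow> nat \<Rightarrow> nat \<Rightarrow> nat" where
  "packing_number t r n = Max {card F | F.
      F \<subseteq> {S. S \<subseteq> {1..n} \<and> card S = r}
      \<and> (\<forall>T. T \<subseteq> {1..n} \<and> card T = t \<longrightarrow> card {S\<in>F. T \<subseteq> S} \<le> 1)}"

end

theory Submission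
  imports Defs
begin

(* In a semisimple automaton, a non-reset word u cannot satisfy rho(u) R rho(u) = 0, since
   such an element lies in the Jacobson radical of R. Hence some u y u is again non-reset, and
   choosing a non-reset factor of minimal rank yields a word w whose non-reset extensions all
   have the same rank m >= Fr. Along a shortest reset extension c of w, the images of w followed
   by the prefixes of c are m-subsets of Q any two of which share at most one state (two common
   states would be merged later, allowing a shorter reset extension), so |c| <= D(2,r,n).
   Every such c lowers the rank of a given word, so n - 1 rounds give a reset word; counting
   pairs gives D(2,r,n) r(r-1) <= n(n-1). *)

lemma wperp_iff: "x \<in> wperp \<longleftrightarrow> sum x UNIV = 0"
  by (simp add: wperp_def)

lemma zero_in_wperp [simp]: "(\<lambda>p. 0) \<in> wperp"
  by (simp add: wperp_iff)

lemma add_in_wperp: "x \<in> wperp \<Longrightarrow> y \<in> wperp \<Longrightarrow> (\<lambda>p. x p + y p) \<in> wperp"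
  by (simp add: wperp_iff sum.distrib)

lemma smult_in_wperp: "x \<in> wperp \<Longrightarrow> (\<lambda>p. c * x p) \<in> wperp"
  by (simp add: wperp_iff sum_distrib_left[symmetric])

lemma word_act_Nil [simp]: "word_act \<delta> q [] = q"
  by (simp add: word_act_def)

lemma word_act_append [simp]: "word_act \<delta> q (u @ v) = word_act \<delta> (word_act \<delta> q u) v"
  by (simp add: word_act_def)

lemma sum_lin_act: "sum (lin_act \<delta> u x) UNIV = sum x UNIV"
proof -
  have "sum (lin_act \<delta> u x) UNIV = (\<Sum>p\<in>UNIV. sum x {q. q \<in> UNIV \<and> word_act \<delta> q u = p})"
    by (simp add: lin_act_def)
  also have "\<dots> = sum x UNIV"
    by (rule sum.group) auto
  finally show ?thesis .
qed

lemma lin_act_in_wperp: "x \<in> wperp \<Longrightarrow> lin_act \<delta> u x \<in> wperp"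
  by (simp add: wperp_iff sum_lin_act)

lemma lin_act_Nil: "lin_act \<delta> [] x = x"
  by (simp add: lin_act_def)

lemma lin_act_append: "lin_act \<delta> (u @ v) x = lin_act \<delta> v (lin_act \<delta> u x)"
proof
  fix p
  have "lin_act \<delta> v (lin_act \<delta> u x) p
      = (\<Sum>s\<in>{s. word_act \<delta> s v = p}.
           sum x {q. q \<in> {q. word_act \<delta> (word_act \<delta> q u) v = p} \<and> word_act \<delta> q u = s})"
    unfolding lin_act_def by (intro sum.cong) auto
  also have "\<dots> = lin_act \<delta> (u @ v) x p"
    unfolding lin_act_def by (subst sum.group) auto
  finally show "lin_act \<delta> (u @ v) x p = lin_act \<delta> v (lin_act \<delta> u x) p" ..
qed

lemma lin_act_add: "lin_act \<delta> u (\<lambda>p. x p + y p) = (\<lambda>p. lin_act \<delta> u x p + lin_act \<delta> u y p)"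
  by (simp add: lin_act_def sum.distrib)

lemma lin_act_smult: "lin_act \<delta> u (\<lambda>p. c * x p) = (\<lambda>p. c * lin_act \<delta> u x p)"
  by (simp add: lin_act_def sum_distrib_left)

definition wperp_endo :: "(('q::finite \<Rightarrow> complex) \<Rightarrow> ('q \<Rightarrow> complex)) \<Rightarrow> bool" where
  "wperp_endo f \<longleftrightarrow> (\<forall>x. x \<notin> wperp \<longrightarrow> f x = (\<lambda>p. 0)) \<and> (\<forall>x. f x \<in> wperp)
     \<and> (\<forall>x\<in>wperp. \<forall>y\<in>wperp. f (\<lambda>p. x p + y p) = (\<lambda>p. f x p + f y p))
     \<and> (\<forall>x\<in>wperp. \<forall>c. f (\<lambda>p. c * x p) = (\<lambda>p. c * f x p))"

lemma
  assumes "wperp_endo f"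
  shows wperp_endo_outside: "x \<notin> wperp \<Longrightarrow> f x = (\<lambda>p. 0)"
    and wperp_endo_in_wperp: "f x \<in> wperp"
    and wperp_endo_add: "x \<in> wperp \<Longrightarrow> y \<in> wperp \<Longrightarrow> f (\<lambda>p. x p + y p) = (\<lambda>p. f x p + f y p)"
    and wperp_endo_smult: "x \<in> wperp \<Longrightarrow> f (\<lambda>p. c * x p) = (\<lambda>p. c * f x p)"
  using assms unfolding wperp_endo_def by blast+

lemma wperp_endo_zero: "wperp_endo f \<Longrightarrow> f (\<lambda>p. 0) = (\<lambda>p. 0)"
  using wperp_endo_smult[of f "\<lambda>p. 0" 0] by simp

lemma wperp_endo_comp:
  assumes "wperp_endo f" and "wperp_endo g"
  shows "wperp_endo (f \<circ> g)"
  using assms wperp_endo_zero[OF assms(1)] unfolding wperp_endo_def by auto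

lemma rho_wperp_endo: "wperp_endo (rho \<delta> u)"
  unfolding wperp_endo_def rho_def
  by (auto simp: lin_act_in_wperp add_in_wperp smult_in_wperp lin_act_add lin_act_smult)

lemma rho_append: "rho \<delta> (u @ v) = rho \<delta> v \<circ> rho \<delta> u"
  by (auto simp: rho_def lin_act_append lin_act_in_wperp fun_eq_iff lin_act_def[of _ _ "\<lambda>p. 0"])

lemma rho_Nil: "x \<in> wperp \<Longrightarrow> rho \<delta> [] x = x"
  by (simp add: rho_def lin_act_Nil)

lemma rho_reset:
  assumes "is_reset \<delta> u"
  shows "rho \<delta> u = (\<lambda>x p. 0)"
proof -
  obtain c where "range (\<lambda>q. word_act \<delta> q u) = {c}"
    using assms unfolding is_reset_def by (rule card_1_singletonE)
  then have "\<And>q. word_act \<delta> q u = c" by auto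
  then show ?thesis
    by (auto simp: rho_def lin_act_def wperp_iff fun_eq_iff)
qed

lemma alg_gen_wperp_endo:
  assumes "f \<in> alg_gen S" and "\<And>g. g \<in> S \<Longrightarrow> wperp_endo g"
  shows "wperp_endo f"
  using assms
proof (induction rule: alg_gen.induct)
  case (add f g)
  then show ?case
    by (auto simp: wperp_endo_def add_in_wperp algebra_simps fun_eq_iff)
next
  case (smult f c)
  then show ?case
    by (auto simp: wperp_endo_def smult_in_wperp algebra_simps fun_eq_iff)
next
  case (mult f g)
  then show ?case by (blast intro: wperp_endo_comp)
qed (auto simp: wperp_endo_def)

lemma R_alg_wperp_endo: "f \<in> R_alg \<delta> \<Longrightarrow> wperp_endo f"
  unfolding R_alg_def using alg_gen_wperp_endo rho_wperp_endo by blast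

lemma alg_gen_invariant:
  assumes "f \<in> alg_gen S" and "z \<in> T"
    and "(\<lambda>p. 0) \<in> T"
    and "\<And>x y. x \<in> T \<Longrightarrow> y \<in> T \<Longrightarrow> (\<lambda>p. x p + y p) \<in> T"
    and "\<And>x c. x \<in> T \<Longrightarrow> (\<lambda>p. c * x p) \<in> T"
    and "\<And>g x. g \<in> S \<Longrightarrow> x \<in> T \<Longrightarrow> g x \<in> T"
  shows "f z \<in> T"
  using assms by (induction arbitrary: z rule: alg_gen.induct) auto

(* A unital ring of maps under pointwise addition and composition. Right distributivity is
   automatic for pointwise sums, so only left distributivity is assumed. *)
locale map_ring =
  fixes R :: "(('q \<Rightarrow> complex) \<Rightarrow> ('q \<Rightarrow> complex)) set"
    and e :: "('q \<Rightarrow> complex) \<Rightarrow> ('q \<Rightarrow> complex)"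
  assumes zero_mem: "(\<lambda>x p. 0) \<in> R"
    and add_mem: "f \<in> R \<Longrightarrow> g \<in> R \<Longrightarrow> (\<lambda>x p. f x p + g x p) \<in> R"
    and uminus_mem: "f \<in> R \<Longrightarrow> (\<lambda>x p. - f x p) \<in> R"
    and comp_mem: "f \<in> R \<Longrightarrow> g \<in> R \<Longrightarrow> f \<circ> g \<in> R"
    and unit_mem: "e \<in> R"
    and unit_comp: "h \<in> R \<Longrightarrow> e \<circ> h = h"
    and comp_unit: "h \<in> R \<Longrightarrow> h \<circ> e = h"
    and comp_add: "h \<in> R \<Longrightarrow> f \<in> R \<Longrightarrow> g \<in> R
      \<Longrightarrow> h \<circ> (\<lambda>x p. f x p + g x p) = (\<lambda>x p. (h \<circ> f) x p + (h \<circ> g) x p)"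
begin

lemma map_zero:
  assumes "h \<in> R"
  shows "h (\<lambda>p. 0) = (\<lambda>p. 0)"
proof -
  have "h (\<lambda>p. 0) = (\<lambda>p. h (\<lambda>p. 0) p + h (\<lambda>p. 0) p)"
    using fun_cong[OF comp_add[OF assms zero_mem zero_mem]] by (simp only: o_apply add_0)
  then show ?thesis
    by (metis add_cancel_right_right)
qed

lemma comp_uminus:
  assumes "h \<in> R" and "f \<in> R"
  shows "h \<circ> (\<lambda>x p. - f x p) = (\<lambda>x p. - (h \<circ> f) x p)"
proof -
  have "(\<lambda>x p. (h \<circ> f) x p + (h \<circ> (\<lambda>x p. - f x p)) x p) = h \<circ> (\<lambda>x p. f x p + - f x p)"
    by (rule comp_add[OF assms uminus_mem[OF assms(2)], symmetric])
  also have "\<dots> = (\<lambda>x p. 0)"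
    using map_zero[OF assms(1)] by (simp add: o_def)
  finally show ?thesis
    by (simp add: fun_eq_iff add_eq_0_iff)
qed

lemma left_ideal_extend:
  assumes L: "left_ideal R L" and "f \<in> R"
  shows "left_ideal R {h. \<exists>l\<in>L. \<exists>g\<in>R. h = (\<lambda>x p. l x p + (g \<circ> f) x p)}"
    (is "left_ideal R ?L'")
  unfolding left_ideal_def
proof (intro conjI ballI subsetI)
  have LR: "L \<subseteq> R" and L0: "(\<lambda>x p. 0) \<in> L"
    and Ladd: "\<And>a b. a \<in> L \<Longrightarrow> b \<in> L \<Longrightarrow> (\<lambda>x p. a x p + b x p) \<in> L"
    and Lneg: "\<And>a. a \<in> L \<Longrightarrow> (\<lambda>x p. - a x p) \<in> L"
    and Lcomp: "\<And>r a. r \<in> R \<Longrightarrow> a \<in> L \<Longrightarrow> r \<circ> a \<in> L"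
    using L unfolding left_ideal_def by blast+
  show "h \<in> R" if hL: "h \<in> ?L'" for h
  proof -
    obtain l g where "l \<in> L" "g \<in> R" and "h = (\<lambda>x p. l x p + (g \<circ> f) x p)"
      using hL by blast
    then show ?thesis
      using LR \<open>f \<in> R\<close> add_mem comp_mem by blast
  qed
  show "(\<lambda>x p. 0) \<in> ?L'"
    using L0 zero_mem by force
  show "(\<lambda>x p. h1 x p + h2 x p) \<in> ?L'" if hL: "h1 \<in> ?L'" "h2 \<in> ?L'" for h1 h2
  proof -
    obtain l1 g1 l2 g2 where l: "l1 \<in> L" "l2 \<in> L" and g: "g1 \<in> R" "g2 \<in> R"
      and "h1 = (\<lambda>x p. l1 x p + (g1 \<circ> f) x p)" "h2 = (\<lambda>x p. l2 x p + (g2 \<circ> f) x p)"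
      using hL by blast
    then show ?thesis
      by (intro CollectI bexI[OF _ Ladd[OF l]] bexI[OF _ add_mem[OF g]]) (simp add: algebra_simps)
  qed
  show "(\<lambda>x p. - h x p) \<in> ?L'" if hL: "h \<in> ?L'" for h
  proof -
    obtain l g where "l \<in> L" "g \<in> R" and "h = (\<lambda>x p. l x p + (g \<circ> f) x p)"
      using hL by blast
    then show ?thesis
      by (intro CollectI bexI[OF _ Lneg] bexI[OF _ uminus_mem]) auto
  qed
  show "r \<circ> h \<in> ?L'" if "r \<in> R" and hL: "h \<in> ?L'" for r h
  proof -
    obtain l g where "l \<in> L" "g \<in> R" and h: "h = (\<lambda>x p. l x p + (g \<circ> f) x p)"
      using hL by blast
    have "r \<circ> h = (\<lambda>x p. (r \<circ> l) x p + ((r \<circ> g) \<circ> f) x p)"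
      using comp_add[OF \<open>r \<in> R\<close>, of l "g \<circ> f"] \<open>l \<in> L\<close> \<open>g \<in> R\<close> LR \<open>f \<in> R\<close>
      unfolding h by (auto intro: comp_mem)
    then show ?thesis
      by (intro CollectI bexI[OF _ Lcomp[OF \<open>r \<in> R\<close> \<open>l \<in> L\<close>]]
          bexI[OF _ comp_mem[OF \<open>r \<in> R\<close> \<open>g \<in> R\<close>]]) simp
  qed
qed

lemma unit_in_left_ideal_of_split:
  assumes L: "left_ideal R L" and "l \<in> L" "g \<in> R" "f \<in> R"
    and sandwich: "\<And>a. a \<in> R \<Longrightarrow> f \<circ> a \<circ> f = (\<lambda>x p. 0)"
    and e_split: "e = (\<lambda>x p. l x p + (g \<circ> f) x p)"
  shows "e \<in> L"
proof -
  have Ladd: "\<And>a b. a \<in> L \<Longrightarrow> b \<in> L \<Longrightarrow> (\<lambda>x p. a x p + b x p) \<in> L"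
    and Lcomp: "\<And>r a. r \<in> R \<Longrightarrow> a \<in> L \<Longrightarrow> r \<circ> a \<in> L"
    using L unfolding left_ideal_def by blast+
  define i where "i = g \<circ> f"
  have iR: "i \<in> R"
    unfolding i_def using \<open>g \<in> R\<close> \<open>f \<in> R\<close> by (rule comp_mem)
  have "i \<circ> i = g \<circ> (f \<circ> g \<circ> f)"
    by (simp add: i_def comp_assoc)
  also have "\<dots> = (\<lambda>x p. 0)"
    using sandwich[OF \<open>g \<in> R\<close>] map_zero[OF \<open>g \<in> R\<close>] by (simp add: o_def)
  finally have ii: "i \<circ> i = (\<lambda>x p. 0)" .
  \<comment> \<open>\<open>l = e - i\<close> with \<open>i\<close> square-zero, so \<open>i = i \<circ> l \<in> L\<close>\<close>
  have "l = (\<lambda>x p. e x p + - i x p)"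
    using e_split by (simp add: i_def fun_eq_iff)
  then have "i \<circ> l = (\<lambda>x p. (i \<circ> e) x p + (i \<circ> (\<lambda>x p. - i x p)) x p)"
    using comp_add[OF iR unit_mem uminus_mem[OF iR]] by simp
  also have "\<dots> = i"
    using comp_unit[OF iR] comp_uminus[OF iR iR] ii by simp
  finally have "i \<in> L"
    using Lcomp[OF iR \<open>l \<in> L\<close>] by simp
  then show "e \<in> L"
    using Ladd[OF \<open>l \<in> L\<close> \<open>i \<in> L\<close>] e_split unfolding i_def by simp
qed

lemma sandwich_zero_imp_jacobson_rad:
  assumes fR: "f \<in> R" and sandwich: "\<And>a. a \<in> R \<Longrightarrow> f \<circ> a \<circ> f = (\<lambda>x p. 0)"
  shows "f \<in> jacobson_rad R"
  unfolding jacobson_rad_def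
proof (intro CollectI conjI allI impI fR)
  fix L assume "maximal_left_ideal R L"
  then have L: "left_ideal R L" and "L \<noteq> R"
    and Lmax: "\<And>L'. left_ideal R L' \<Longrightarrow> L \<subseteq> L' \<Longrightarrow> L' = L \<or> L' = R"
    unfolding maximal_left_ideal_def by blast+
  have LR: "L \<subseteq> R" and L0: "(\<lambda>x p. 0) \<in> L"
    and Lcomp: "\<And>r a. r \<in> R \<Longrightarrow> a \<in> L \<Longrightarrow> r \<circ> a \<in> L"
    using L unfolding left_ideal_def by blast+
  show "f \<in> L"
  proof (rule ccontr)
    assume "f \<notin> L"
    define L' where "L' = {h. \<exists>l\<in>L. \<exists>g\<in>R. h = (\<lambda>x p. l x p + (g \<circ> f) x p)}"
    have "L \<subseteq> L'"
      unfolding L'_def using zero_mem by force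
    moreover have "f \<in> L'"
      unfolding L'_def
      by (intro CollectI bexI[OF _ L0] bexI[OF _ unit_mem]) (simp add: unit_comp[OF fR])
    ultimately have "L' = R"
      using Lmax[OF left_ideal_extend[OF L fR, folded L'_def]] \<open>f \<notin> L\<close> by blast
    then obtain l g where "l \<in> L" "g \<in> R" and "e = (\<lambda>x p. l x p + (g \<circ> f) x p)"
      using unit_mem unfolding L'_def by blast
    then have "e \<in> L"
      using unit_in_left_ideal_of_split[OF L _ _ fR sandwich] by blast
    then have "R \<subseteq> L"
      using Lcomp comp_unit by (metis subsetI)
    then show False
      using LR \<open>L \<noteq> R\<close> by blast
  qed
qed

end

lemma map_ring_R_alg: "map_ring (R_alg \<delta>) (rho \<delta> [])"
proof
  fix f g h
  assume f: "f \<in> R_alg \<delta>" and g: "g \<in> R_alg \<delta>" and h: "h \<in> R_alg \<delta>"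
  show "(\<lambda>x p. f x p + g x p) \<in> R_alg \<delta>" "f \<circ> g \<in> R_alg \<delta>"
    using f g unfolding R_alg_def by (auto intro: alg_gen.intros)
  show "(\<lambda>x p. - f x p) \<in> R_alg \<delta>"
    using alg_gen.smult[of f _ "-1"] f unfolding R_alg_def by simp
  have hw: "wperp_endo h"
    using h by (rule R_alg_wperp_endo)
  show "rho \<delta> [] \<circ> h = h"
    using wperp_endo_in_wperp[OF hw] by (simp add: fun_eq_iff rho_Nil)
  show "h \<circ> rho \<delta> [] = h"
    using wperp_endo_outside[OF hw] wperp_endo_zero[OF hw]
    by (auto simp: fun_eq_iff rho_def lin_act_Nil)
  show "h \<circ> (\<lambda>x p. f x p + g x p) = (\<lambda>x p. (h \<circ> f) x p + (h \<circ> g) x p)"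
    using wperp_endo_add[OF hw] wperp_endo_in_wperp[OF R_alg_wperp_endo[OF f]]
      wperp_endo_in_wperp[OF R_alg_wperp_endo[OF g]] by (simp add: fun_eq_iff)
qed (auto simp: R_alg_def intro: alg_gen.intros)

lemma rho_in_R_alg: "rho \<delta> u \<in> R_alg \<delta>"
  unfolding R_alg_def by (rule alg_gen.gen) simp

definition suffix_kernel :: "('q::finite \<Rightarrow> 'a \<Rightarrow> 'q) \<Rightarrow> 'a list \<Rightarrow> ('q \<Rightarrow> complex) set" where
  "suffix_kernel \<delta> u = {z \<in> wperp. \<forall>y. rho \<delta> (y @ u) z = (\<lambda>p. 0)}"

lemma R_alg_preserves_suffix_kernel:
  assumes "a \<in> R_alg \<delta>" and "z \<in> suffix_kernel \<delta> u"
  shows "a z \<in> suffix_kernel \<delta> u"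
  using assms unfolding R_alg_def
proof (rule alg_gen_invariant)
  show "(\<lambda>p. 0) \<in> suffix_kernel \<delta> u"
    unfolding suffix_kernel_def by (simp add: wperp_endo_zero[OF rho_wperp_endo])
  show "(\<lambda>p. x p + y p) \<in> suffix_kernel \<delta> u"
    if "x \<in> suffix_kernel \<delta> u" and "y \<in> suffix_kernel \<delta> u" for x y
    using that by (simp add: suffix_kernel_def add_in_wperp wperp_endo_add[OF rho_wperp_endo])
  show "(\<lambda>p. c * x p) \<in> suffix_kernel \<delta> u" if "x \<in> suffix_kernel \<delta> u" for x c
    using that by (simp add: suffix_kernel_def smult_in_wperp wperp_endo_smult[OF rho_wperp_endo])
  show "g x \<in> suffix_kernel \<delta> u" if "g \<in> range (rho \<delta>)" and x: "x \<in> suffix_kernel \<delta> u" for g x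
  proof -
    obtain v where g: "g = rho \<delta> v"
      using \<open>g \<in> range (rho \<delta>)\<close> by blast
    have "rho \<delta> (y @ u) (rho \<delta> v x) = (\<lambda>p. 0)" for y
    proof -
      have "rho \<delta> (y @ u) (rho \<delta> v x) = rho \<delta> ((v @ y) @ u) x"
        by (simp add: rho_append)
      also have "\<dots> = (\<lambda>p. 0)"
        using x unfolding suffix_kernel_def by blast
      finally show ?thesis .
    qed
    then show ?thesis
      using wperp_endo_in_wperp[OF rho_wperp_endo] by (simp add: suffix_kernel_def g)
  qed
qed

lemma rho_sandwich_zero:
  assumes reset: "\<And>y. is_reset \<delta> (u @ y @ u)" and "a \<in> R_alg \<delta>"
  shows "rho \<delta> u \<circ> a \<circ> rho \<delta> u = (\<lambda>x p. 0)"
proof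
  fix x
  have "rho \<delta> (y @ u) (rho \<delta> u x) = (\<lambda>p. 0)" for y
    using fun_cong[OF rho_append[of \<delta> u "y @ u"], of x] rho_reset[OF reset] by simp
  then have "rho \<delta> u x \<in> suffix_kernel \<delta> u"
    unfolding suffix_kernel_def using wperp_endo_in_wperp[OF rho_wperp_endo] by blast
  then have "a (rho \<delta> u x) \<in> suffix_kernel \<delta> u"
    by (rule R_alg_preserves_suffix_kernel[OF \<open>a \<in> R_alg \<delta>\<close>])
  then show "(rho \<delta> u \<circ> a \<circ> rho \<delta> u) x = (\<lambda>p. 0)"
    unfolding suffix_kernel_def by (metis (mono_tags) append_Nil comp_apply mem_Collect_eq)
qed

lemma semisimple_sandwich_not_reset:
  assumes "semisimple \<delta>" and "\<not> is_reset \<delta> u"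
  shows "\<exists>y. \<not> is_reset \<delta> (u @ y @ u)"
proof (rule ccontr)
  assume "\<nexists>y. \<not> is_reset \<delta> (u @ y @ u)"
  then have "rho \<delta> u \<in> jacobson_rad (R_alg \<delta>)"
    using rho_sandwich_zero
    by (intro map_ring.sandwich_zero_imp_jacobson_rad[OF map_ring_R_alg rho_in_R_alg]) blast
  then show False
    using assms unfolding semisimple_def Rad_words_def Syn_def by blast
qed

definition word_image :: "('q \<Rightarrow> 'a \<Rightarrow> 'q) \<Rightarrow> 'a list \<Rightarrow> 'q set" where
  "word_image \<delta> w = range (\<lambda>q. word_act \<delta> q w)"

definition word_rank :: "('q \<Rightarrow> 'a \<Rightarrow> 'q) \<Rightarrow> 'a list \<Rightarrow> nat" where
  "word_rank \<delta> w = card (word_image \<delta> w)"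

lemma is_reset_iff_word_rank: "is_reset \<delta> u \<longleftrightarrow> word_rank \<delta> u = 1"
  by (simp add: is_reset_def word_rank_def word_image_def)

lemma word_image_Nil [simp]: "word_image \<delta> [] = UNIV"
  by (simp add: word_image_def)

lemma word_image_append: "word_image \<delta> (u @ v) = (\<lambda>q. word_act \<delta> q v) ` word_image \<delta> u"
  by (auto simp: word_image_def)

lemma word_image_append_subset: "word_image \<delta> (u @ v) \<subseteq> word_image \<delta> v"
  by (auto simp: word_image_def)

lemma word_rank_pos:
  fixes \<delta> :: "'q::finite \<Rightarrow> 'a \<Rightarrow> 'q"
  shows "0 < word_rank \<delta> u"
  by (simp add: word_rank_def word_image_def card_gt_0_iff)

lemma word_rank_append_left:
  fixes \<delta> :: "'q::finite \<Rightarrow> 'a \<Rightarrow> 'q"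
  shows "word_rank \<delta> (u @ v) \<le> word_rank \<delta> u"
  unfolding word_rank_def word_image_append by (rule card_image_le) simp

lemma word_rank_append_right:
  fixes \<delta> :: "'q::finite \<Rightarrow> 'a \<Rightarrow> 'q"
  shows "word_rank \<delta> (u @ v) \<le> word_rank \<delta> v"
  unfolding word_rank_def by (rule card_mono[OF _ word_image_append_subset]) simp

lemma is_reset_append_left:
  fixes \<delta> :: "'q::finite \<Rightarrow> 'a \<Rightarrow> 'q"
  shows "is_reset \<delta> u \<Longrightarrow> is_reset \<delta> (u @ v)"
  using word_rank_append_left[of \<delta> u v] word_rank_pos[of \<delta> "u @ v"]
  by (simp add: is_reset_iff_word_rank)

lemma is_reset_append_right:
  fixes \<delta> :: "'q::finite \<Rightarrow> 'a \<Rightarrow> 'q"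
  shows "is_reset \<delta> v \<Longrightarrow> is_reset \<delta> (u @ v)"
  using word_rank_append_right[of \<delta> u v] word_rank_pos[of \<delta> "u @ v"]
  by (simp add: is_reset_iff_word_rank)

lemma former_rank_le_word_rank:
  fixes \<delta> :: "'q::finite \<Rightarrow> 'a \<Rightarrow> 'q"
  assumes "\<not> is_reset \<delta> u"
  shows "former_rank \<delta> \<le> word_rank \<delta> u"
proof -
  let ?ranks = "{card ((\<lambda>q. word_act \<delta> q u) ` UNIV) | u. u \<notin> Syn \<delta>}"
  have "?ranks \<subseteq> {..CARD('q)}"
    by (auto intro: card_mono)
  then have "finite ?ranks"
    by (rule finite_subset) simp
  moreover have "word_rank \<delta> u \<in> ?ranks"
    using assms by (auto simp: word_rank_def word_image_def Syn_def)
  ultimately show ?thesis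
    unfolding former_rank_def by (rule Min_le)
qed

lemma obtain_two_distinct:
  assumes "finite A" and "1 < card A"
  obtains p q where "p \<in> A" "q \<in> A" "p \<noteq> q"
  using assms card_le_Suc0_iff_eq[of A] by (auto simp: not_le[symmetric])

lemma card_image_less_if_merge:
  assumes "finite A" "p \<in> A" "q \<in> A" "p \<noteq> q" "f p = f q"
  shows "card (f ` A) < card A"
proof -
  have "\<not> inj_on f A"
    using assms unfolding inj_on_def by blast
  then show ?thesis
    using inj_on_iff_eq_card[OF assms(1), of f] card_image_le[OF assms(1), of f] by linarith
qed

lemma reset_extension_merges:
  assumes "is_reset \<delta> (u @ v)" and "p \<in> word_image \<delta> u" and "q \<in> word_image \<delta> u"
  shows "word_act \<delta> p v = word_act \<delta> q v"
proof -
  have "card ((\<lambda>s. word_act \<delta> s v) ` word_image \<delta> u) = 1"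
    using assms(1) unfolding is_reset_def by (simp only: word_image_def[symmetric] word_image_append)
  then obtain z where "(\<lambda>s. word_act \<delta> s v) ` word_image \<delta> u = {z}"
    by (rule card_1_singletonE)
  then show ?thesis
    using assms(2,3) by (metis image_eqI singletonD)
qed

lemma word_rank_append_less:
  fixes \<delta> :: "'q::finite \<Rightarrow> 'a \<Rightarrow> 'q"
  assumes "p \<in> word_image \<delta> u" "q \<in> word_image \<delta> u" "p \<noteq> q"
    and "word_act \<delta> p v = word_act \<delta> q v"
  shows "word_rank \<delta> (u @ v) < word_rank \<delta> u"
  unfolding word_rank_def word_image_append
  by (rule card_image_less_if_merge[OF _ assms]) simp

lemma finite_packing_sizes:
  fixes n r t :: nat
  shows "finite {card F | F. F \<subseteq> {S. S \<subseteq> {1..n} \<and> card S = r}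
      \<and> (\<forall>T. T \<subseteq> {1..n} \<and> card T = t \<longrightarrow> card {S\<in>F. T \<subseteq> S} \<le> 1)}"
  by (rule finite_subset[of _ "card ` Pow (Pow {1..n})"]) (auto intro!: finite_imageI)

lemma packing_number_ge:
  assumes F: "F \<subseteq> {S. S \<subseteq> {1..n} \<and> card S = r}"
    and meet: "\<And>S1 S2. S1 \<in> F \<Longrightarrow> S2 \<in> F \<Longrightarrow> S1 \<noteq> S2 \<Longrightarrow> card (S1 \<inter> S2) \<le> 1"
  shows "card F \<le> packing_number 2 r n"
proof -
  have "F \<subseteq> Pow {1..n}"
    using F by blast
  then have "finite F"
    by (rule finite_subset) simp
  have "card {S\<in>F. T \<subseteq> S} \<le> 1" if "card T = 2" for T
  proof -
    have "S1 = S2" if "S1 \<in> F" "S2 \<in> F" "T \<subseteq> S1" "T \<subseteq> S2" for S1 S2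
    proof (rule ccontr)
      assume "S1 \<noteq> S2"
      have "S1 \<inter> S2 \<subseteq> {1..n}"
        using \<open>S1 \<in> F\<close> F by blast
      then have "finite (S1 \<inter> S2)"
        by (rule finite_subset) simp
      then have "card T \<le> card (S1 \<inter> S2)"
        using that by (intro card_mono) auto
      then show False
        using meet[OF \<open>S1 \<in> F\<close> \<open>S2 \<in> F\<close> \<open>S1 \<noteq> S2\<close>] \<open>card T = 2\<close> by simp
    qed
    then show ?thesis
      unfolding One_nat_def using card_le_Suc0_iff_eq[of "{S\<in>F. T \<subseteq> S}"] \<open>finite F\<close> by auto
  qed
  then show ?thesis
    unfolding packing_number_def using F by (intro Max_ge[OF finite_packing_sizes]) blast
qed

lemma packing_number_ge_family:
  fixes B :: "nat \<Rightarrow> 'q::finite set"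
  assumes "2 \<le> r" and large: "\<And>i. i < L \<Longrightarrow> r \<le> card (B i)"
    and meet: "\<And>i j. i < L \<Longrightarrow> j < L \<Longrightarrow> i \<noteq> j \<Longrightarrow> card (B i \<inter> B j) \<le> 1"
  shows "L \<le> packing_number 2 r CARD('q)"
proof -
  obtain f :: "'q \<Rightarrow> nat" where f: "bij_betw f UNIV {1..CARD('q)}"
    using bij_betw_iff_card[of "UNIV :: 'q set" "{1..CARD('q)}"] by auto
  then have "inj f" and f_range: "range f = {1..CARD('q)}"
    by (simp_all add: bij_betw_def)
  have card_f: "card (f ` A) = card A" for A
    using card_image[OF inj_on_subset[OF \<open>inj f\<close> subset_UNIV]] .
  have "\<forall>i. \<exists>T. i < L \<longrightarrow> T \<subseteq> B i \<and> card T = r"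
    using obtain_subset_with_card_n[OF large] by metis
  then obtain C where C: "\<And>i. i < L \<Longrightarrow> C i \<subseteq> B i \<and> card (C i) = r"
    by (metis choice)
  have meet_C: "card (C i \<inter> C j) \<le> 1" if "i < L" "j < L" "i \<noteq> j" for i j
  proof -
    have "card (C i \<inter> C j) \<le> card (B i \<inter> B j)"
      using C[OF that(1)] C[OF that(2)] by (intro card_mono) auto
    then show ?thesis
      using meet[OF that] by simp
  qed
  define F where "F = (\<lambda>i. f ` C i) ` {..<L}"
  have "inj_on (\<lambda>i. f ` C i) {..<L}"
  proof
    fix i j assume "i \<in> {..<L}" "j \<in> {..<L}" "f ` C i = f ` C j"
    then have "C i \<inter> C j = C i" and "card (C i) = r"
      using C \<open>inj f\<close> by (auto simp: inj_image_eq_iff)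
    then show "i = j"
      using meet_C \<open>i \<in> {..<L}\<close> \<open>j \<in> {..<L}\<close> \<open>2 \<le> r\<close> by fastforce
  qed
  then have "L = card F"
    unfolding F_def by (simp add: card_image)
  also have "card F \<le> packing_number 2 r CARD('q)"
  proof (rule packing_number_ge)
    show "F \<subseteq> {S. S \<subseteq> {1..CARD('q)} \<and> card S = r}"
      unfolding F_def using C card_f f_range by auto
    show "card (S1 \<inter> S2) \<le> 1" if S: "S1 \<in> F" "S2 \<in> F" "S1 \<noteq> S2" for S1 S2
    proof -
      obtain i j where "i < L" "j < L" "i \<noteq> j" and "S1 = f ` C i" "S2 = f ` C j"
        using S unfolding F_def by blast
      then have "card (S1 \<inter> S2) = card (C i \<inter> C j)"
        using card_f by (simp add: image_Int[OF \<open>inj f\<close>, symmetric])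
      then show ?thesis
        using meet_C[OF \<open>i < L\<close> \<open>j < L\<close> \<open>i \<noteq> j\<close>] by simp
    qed
  qed
  finally show ?thesis .
qed

lemma two_mult_choose_two: "2 * (k choose 2) = k * (k - 1)"
  by (cases k) (simp_all add: choose_two)

lemma packing_number_le:
  assumes "2 \<le> r"
  shows "packing_number 2 r n * (r * (r - 1)) \<le> n * (n - 1)"
proof -
  obtain F where D: "packing_number 2 r n = card F"
    and F: "F \<subseteq> {S. S \<subseteq> {1..n} \<and> card S = r}"
    and meet: "\<And>T. T \<subseteq> {1..n} \<Longrightarrow> card T = 2 \<Longrightarrow> card {S\<in>F. T \<subseteq> S} \<le> 1"
  proof -
    let ?sizes = "{card F | F. F \<subseteq> {S. S \<subseteq> {1..n} \<and> card S = r}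
      \<and> (\<forall>T. T \<subseteq> {1..n} \<and> card T = 2 \<longrightarrow> card {S\<in>F. T \<subseteq> S} \<le> 1)}"
    have "card {} \<in> ?sizes"
      by (intro CollectI exI[of _ "{}"]) simp
    then have "packing_number 2 r n \<in> ?sizes"
      unfolding packing_number_def by (intro Max_in[OF finite_packing_sizes]) blast
    then obtain G where "packing_number 2 r n = card G" and "G \<subseteq> {S. S \<subseteq> {1..n} \<and> card S = r}"
      and "\<forall>T. T \<subseteq> {1..n} \<and> card T = 2 \<longrightarrow> card {S\<in>G. T \<subseteq> S} \<le> 1"
      by blast
    then show ?thesis
      by (intro that) auto
  qed
  have "F \<subseteq> Pow {1..n}"
    using F by blast
  then have "finite F"
    by (rule finite_subset) simp
  have finite_members: "finite S" if "S \<in> F" for S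
    using that \<open>F \<subseteq> Pow {1..n}\<close> finite_subset[of S "{1..n}"] by auto
  \<comment> \<open>Double counting: distinct members of \<open>F\<close> share no \<open>2\<close>-subset.\<close>
  define pairs where "pairs S = {T. T \<subseteq> S \<and> card T = 2}" for S :: "nat set"
  have card_pairs: "card (pairs S) = card S choose 2" if "finite S" for S
    unfolding pairs_def using n_subsets[OF that] by simp
  have finite_pairs: "finite (pairs S)" if "finite S" for S
  proof -
    have "pairs S \<subseteq> Pow S"
      unfolding pairs_def by blast
    then show ?thesis
      by (rule finite_subset) (simp add: that)
  qed
  have "pairs S1 \<inter> pairs S2 = {}" if "S1 \<in> F" "S2 \<in> F" "S1 \<noteq> S2" for S1 S2
  proof (rule ccontr)
    assume "pairs S1 \<inter> pairs S2 \<noteq> {}"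
    then obtain T where T: "T \<subseteq> S1" "T \<subseteq> S2" "card T = 2"
      unfolding pairs_def by blast
    have "T \<subseteq> {1..n}"
      using T(1) that(1) F by blast
    then have "card {S\<in>F. T \<subseteq> S} \<le> 1"
      using meet T(3) by blast
    moreover have "{S1, S2} \<subseteq> {S\<in>F. T \<subseteq> S}"
      using T that by blast
    ultimately show False
      using card_mono[of "{S\<in>F. T \<subseteq> S}" "{S1, S2}"] \<open>finite F\<close> \<open>S1 \<noteq> S2\<close> by simp
  qed
  then have "card (\<Union>S\<in>F. pairs S) = (\<Sum>S\<in>F. card (pairs S))"
    using \<open>finite F\<close> finite_pairs finite_members by (intro card_UN_disjoint) auto
  also have "\<dots> = (\<Sum>S\<in>F. r choose 2)"
    using F card_pairs finite_members by (intro sum.cong) auto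
  also have "\<dots> = card F * (r choose 2)"
    by simp
  finally have "card F * (r choose 2) = card (\<Union>S\<in>F. pairs S)" ..
  also have "\<dots> \<le> card (pairs {1..n})"
    using F by (intro card_mono finite_pairs) (auto simp: pairs_def)
  also have "\<dots> = n choose 2"
    using card_pairs by simp
  finally have "card F * (2 * (r choose 2)) \<le> 2 * (n choose 2)"
    by simp
  then show ?thesis
    unfolding D two_mult_choose_two .
qed

definition rank_stable :: "('q \<Rightarrow> 'a \<Rightarrow> 'q) \<Rightarrow> 'a list \<Rightarrow> bool" where
  "rank_stable \<delta> w \<longleftrightarrow> \<not> is_reset \<delta> w
     \<and> (\<forall>s. \<not> is_reset \<delta> (w @ s) \<longrightarrow> word_rank \<delta> (w @ s) = word_rank \<delta> w)"

lemma exists_rank_stable_extension: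
  fixes \<delta> :: "'q::finite \<Rightarrow> 'a \<Rightarrow> 'q"
  assumes sandwich: "\<And>u. \<not> is_reset \<delta> u \<Longrightarrow> \<exists>y. \<not> is_reset \<delta> (u @ y @ u)"
    and "\<not> is_reset \<delta> x"
  obtains t where "rank_stable \<delta> (t @ x)"
proof -
  obtain a b where ab: "\<not> is_reset \<delta> (a @ x @ b)"
    and min: "\<And>a' b'. \<not> is_reset \<delta> (a' @ x @ b') \<Longrightarrow> word_rank \<delta> (a @ x @ b) \<le> word_rank \<delta> (a' @ x @ b')"
    using ex_has_least_nat[of "\<lambda>(a, b). \<not> is_reset \<delta> (a @ x @ b)" "([], [])"
        "\<lambda>(a, b). word_rank \<delta> (a @ x @ b)"] assms(2)
    by auto
  define w where "w = a @ x @ b"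
  obtain y where y: "\<not> is_reset \<delta> (w @ y @ w)"
    using sandwich ab unfolding w_def by blast
  define t where "t = a @ x @ b @ y @ a"
  \<comment> \<open>Every extension of \<open>t @ x\<close> factors through \<open>w\<close> and is of the form \<open>a' @ x @ b'\<close>,
    so a non-reset one has rank both at most and at least that of \<open>w\<close>.\<close>
  have rank_w: "word_rank \<delta> (t @ x @ s) = word_rank \<delta> w" if "\<not> is_reset \<delta> (t @ x @ s)" for s
  proof (rule antisym)
    show "word_rank \<delta> (t @ x @ s) \<le> word_rank \<delta> w"
      using word_rank_append_left[of \<delta> w "y @ a @ x @ s"] by (simp add: t_def w_def)
    show "word_rank \<delta> w \<le> word_rank \<delta> (t @ x @ s)"
      using min[OF that] by (simp add: w_def)
  qed
  have "\<not> is_reset \<delta> (t @ x)"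
    using y is_reset_append_left[of \<delta> "t @ x" b] by (auto simp: t_def w_def)
  then have "rank_stable \<delta> (t @ x)"
    unfolding rank_stable_def using rank_w[of "[]"] rank_w by simp
  then show ?thesis ..
qed

lemma rank_stable_shortest_reset_extension:
  fixes \<delta> :: "'q::finite \<Rightarrow> 'a \<Rightarrow> 'q"
  assumes stable: "rank_stable \<delta> w" and reset: "is_reset \<delta> (w @ c)"
    and shortest: "\<And>c'. is_reset \<delta> (w @ c') \<Longrightarrow> length c \<le> length c'"
    and "2 \<le> r" and "r \<le> word_rank \<delta> w"
  shows "length c \<le> packing_number 2 r CARD('q)"
proof -
  define B where "B i = word_image \<delta> (w @ take i c)" for i
  have not_reset: "\<not> is_reset \<delta> (w @ take i c)" if "i < length c" for i
    using shortest[of "take i c"] that by auto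
  have card_B: "card (B i) = word_rank \<delta> w" if "i < length c" for i
    using stable not_reset[OF that] unfolding rank_stable_def B_def word_rank_def by simp
  have meet: "card (B i \<inter> B j) \<le> 1" if "i < j" "j < length c" for i j
  proof (rule ccontr)
    assume "\<not> card (B i \<inter> B j) \<le> 1"
    then obtain p q where pq: "p \<in> B i \<inter> B j" "q \<in> B i \<inter> B j" "p \<noteq> q"
      using obtain_two_distinct[OF finite] by (metis not_le)
    \<comment> \<open>the tail \<open>drop j c\<close> already merges two states of \<open>B i\<close>, so the letters between
      positions \<open>i\<close> and \<open>j\<close> can be skipped\<close>
    have "word_act \<delta> p (drop j c) = word_act \<delta> q (drop j c)"
      using reset_extension_merges[of \<delta> "w @ take j c" "drop j c"] reset pq
      unfolding B_def by simp
    then have "word_rank \<delta> ((w @ take i c) @ drop j c) < word_rank \<delta> (w @ take i c)"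
      using pq word_rank_append_less[of p \<delta> "w @ take i c" q "drop j c"] unfolding B_def by blast
    then have "is_reset \<delta> (w @ take i c @ drop j c)"
      using stable card_B that unfolding rank_stable_def B_def word_rank_def by force
    then have "length c \<le> length (take i c @ drop j c)"
      by (rule shortest)
    then show False
      using that by simp
  qed
  show ?thesis
  proof (rule packing_number_ge_family[of r "length c" B])
    show "card (B i \<inter> B j) \<le> 1" if "i < length c" "j < length c" "i \<noteq> j" for i j
      using meet[of i j] meet[of j i] that by (cases "i < j") (auto simp: Int_commute)
  qed (use card_B assms in auto)
qed

lemma rank_reduction:
  fixes \<delta> :: "'q::finite \<Rightarrow> 'a \<Rightarrow> 'q"
  assumes sandwich: "\<And>u. \<not> is_reset \<delta> u \<Longrightarrow> \<exists>y. \<not> is_reset \<delta> (u @ y @ u)"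
    and "is_reset \<delta> s0" and "2 \<le> former_rank \<delta>" and "\<not> is_reset \<delta> x"
  obtains c where "length c \<le> packing_number 2 (former_rank \<delta>) CARD('q)"
    and "word_rank \<delta> (x @ c) < word_rank \<delta> x"
proof -
  obtain t where stable: "rank_stable \<delta> (t @ x)"
    using exists_rank_stable_extension[OF sandwich \<open>\<not> is_reset \<delta> x\<close>] by blast
  have "is_reset \<delta> ((t @ x) @ s0)"
    using is_reset_append_right[OF \<open>is_reset \<delta> s0\<close>] .
  then obtain c where reset: "is_reset \<delta> ((t @ x) @ c)"
    and shortest: "\<And>c'. is_reset \<delta> ((t @ x) @ c') \<Longrightarrow> length c \<le> length c'"
    using ex_has_least_nat[of "\<lambda>c. is_reset \<delta> ((t @ x) @ c)" s0 length] by blast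
  have rank_t: "former_rank \<delta> \<le> word_rank \<delta> (t @ x)"
    using stable former_rank_le_word_rank unfolding rank_stable_def by blast
  have "length c \<le> packing_number 2 (former_rank \<delta>) CARD('q)"
    by (rule rank_stable_shortest_reset_extension[OF stable reset shortest assms(3) rank_t])
  moreover have "word_rank \<delta> (x @ c) < word_rank \<delta> x"
  proof -
    have "1 < card (word_image \<delta> (t @ x))"
      using assms(3) rank_t unfolding word_rank_def by linarith
    then obtain p q where pq: "p \<in> word_image \<delta> (t @ x)" "q \<in> word_image \<delta> (t @ x)" "p \<noteq> q"
      by (rule obtain_two_distinct[OF finite])
    then have "word_act \<delta> p c = word_act \<delta> q c"
      using reset_extension_merges[OF reset] by blast
    moreover have "p \<in> word_image \<delta> x" "q \<in> word_image \<delta> x"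
      using pq word_image_append_subset[of \<delta> t x] by auto
    ultimately show ?thesis
      using word_rank_append_less \<open>p \<noteq> q\<close> by blast
  qed
  ultimately show ?thesis ..
qed

lemma reset_extension_length_le:
  fixes \<delta> :: "'q::finite \<Rightarrow> 'a \<Rightarrow> 'q"
  assumes sandwich: "\<And>u. \<not> is_reset \<delta> u \<Longrightarrow> \<exists>y. \<not> is_reset \<delta> (u @ y @ u)"
    and "is_reset \<delta> s0" and "2 \<le> former_rank \<delta>"
  shows "\<exists>c. is_reset \<delta> (x @ c)
    \<and> length c \<le> (word_rank \<delta> x - 1) * packing_number 2 (former_rank \<delta>) CARD('q)"
proof (induction "word_rank \<delta> x" arbitrary: x rule: less_induct)
  case less
  let ?D = "packing_number 2 (former_rank \<delta>) CARD('q)"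
  show ?case
  proof (cases "is_reset \<delta> x")
    case True
    then show ?thesis
      by (intro exI[of _ "[]"]) simp
  next
    case False
    obtain c1 where c1: "length c1 \<le> ?D" and less_rank: "word_rank \<delta> (x @ c1) < word_rank \<delta> x"
      using rank_reduction[OF sandwich assms(2,3) False] by blast
    obtain c2 where reset: "is_reset \<delta> (x @ c1 @ c2)"
      and c2: "length c2 \<le> (word_rank \<delta> (x @ c1) - 1) * ?D"
      using less(1)[OF less_rank] by auto
    have "length (c1 @ c2) \<le> ?D + (word_rank \<delta> (x @ c1) - 1) * ?D"
      using c1 c2 by simp
    also have "\<dots> = word_rank \<delta> (x @ c1) * ?D"
      using word_rank_pos[of \<delta> "x @ c1"] by (cases "word_rank \<delta> (x @ c1)") auto
    also have "\<dots> \<le> (word_rank \<delta> x - 1) * ?D"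
      using less_rank by (intro mult_right_mono) auto
    finally show ?thesis
      using reset by auto
  qed
qed

lemma packing_number_le_real:
  assumes "2 \<le> r"
  shows "real ((n - 1) * packing_number 2 r n)
    \<le> real n * (real n - 1)\<^sup>2 / (real r * (real r - 1))"
proof (cases "n = 0")
  case False
  have pos: "0 < real r * (real r - 1)"
    using assms by simp
  have "real (packing_number 2 r n) * (real r * (real r - 1)) \<le> real n * (real n - 1)"
  proof -
    have "real (packing_number 2 r n * (r * (r - 1))) \<le> real (n * (n - 1))"
      using packing_number_le[OF assms] by (simp only: of_nat_le_iff)
    then show ?thesis
      using assms False by (simp add: of_nat_diff)
  qed
  then have "real (packing_number 2 r n) \<le> real n * (real n - 1) / (real r * (real r - 1))"
    using pos by (simp add: pos_le_divide_eq)
  then have "(real n - 1) * real (packing_number 2 r n)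
      \<le> (real n - 1) * (real n * (real n - 1) / (real r * (real r - 1)))"
    using False by (intro mult_left_mono) auto
  then show ?thesis
    using False by (simp add: of_nat_diff power2_eq_square mult_ac)
qed simp

theorem mainTheorem1:
  fixes \<delta> :: "'q::finite \<Rightarrow> 'a::finite \<Rightarrow> 'q"
  assumes "semisimple \<delta>"
    and "former_rank \<delta> \<ge> 2"
  shows "(\<exists>u\<in>Syn \<delta>. length u \<le> (CARD('q) - 1) * packing_number 2 (former_rank \<delta>) (CARD('q)))
       \<and> (\<exists>u\<in>Syn \<delta>. real (length u) \<le> real (CARD('q)) * (real (CARD('q)) - 1)^2
              / (real (former_rank \<delta>) * (real (former_rank \<delta>) - 1)))"
proof -
  obtain s0 where "is_reset \<delta> s0"
    using assms(1) unfolding semisimple_def synchronizing_def Syn_def by blast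
  then obtain u where "is_reset \<delta> u"
    and length_u: "length u \<le> (CARD('q) - 1) * packing_number 2 (former_rank \<delta>) CARD('q)"
    using reset_extension_length_le[OF semisimple_sandwich_not_reset[OF assms(1)] _ assms(2), of s0 "[]"]
    by (auto simp: word_rank_def)
  moreover have "real (length u) \<le> real (CARD('q)) * (real (CARD('q)) - 1)^2
      / (real (former_rank \<delta>) * (real (former_rank \<delta>) - 1))"
    using of_nat_mono[OF length_u] packing_number_le_real[OF assms(2)] by (rule order_trans)
  ultimately show ?thesis
    unfolding Syn_def by blast
qed

end
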